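(* Suppose $(A,B,K,\tilde\Theta)$ with $\tilde\Theta\in\mathbb{S}_+^{n_x}$ satisfies $$(A+BK)^\top\tilde\Theta(A+BK)-\tilde\Theta+\tilde Q+K^\top\tilde RK\prec0. \quad (\mathrm{D})$$ Consider the LMI in the variables $(\mathbf A,\mathbf B,\mathbf K,\tilde{\mathbf\Theta})$: $$\begin{bmatrix} \mathbf I & \mathbf 0 & \mathbf 0 & -\mathbf B^\top & \mathbf K\\ * & \tilde Q^{-1} & \mathbf 0 & \mathbf 0 & \mathbf I\\ * & * & \tilde R^{-1} & \mathbf 0 & \mathbf K\\ * & * & * & \mathcal{L}^{\mathbf I,\tilde\Theta}_{\mathbf I,\tilde{\mathbf\Theta}}+\mathcal{L}^{B^\top,\mathbf I}_{\mathbf B^\top,\mathbf I} & \mathbf A\\ * & * & * & * & \tilde{\mathbf\Theta}+\mathcal{L}^{K,\mathbf I}_{\mathbf K,\mathbf I} \end{bmatrix}\succ0.$$ Then (a) it is satisfied by $(A,B,K,\tilde\Theta)$; and (b) every solution with $\tilde{\mathbf\Theta}\in\mathbb{S}_+^{n_x}$ satisfies (D) with $(A,B,K,\tilde\Theta)$ replaced by $(\mathbf A,\mathbf B,\mathbf K,\tilde{\mathbf\Theta})$.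
   Context: $A\in\mathbb{R}^{n_x\times n_x}$, $B\in\mathbb{R}^{n_x\times n_u}$, $K\in\mathbb{R}^{n_u\times n_x}$ (bold versions same sizes); $\tilde Q\in\mathbb{S}_+^{n_x}$, $\tilde R\in\mathbb{S}_+^{n_u}$ are fixed. $\mathbb{S}_+^m$ is the set of $m\times m$ symmetric positive definite matrices; $\succ0$ ($\prec0$) means symmetric positive (negative) definite; $*$ denotes symmetric blocks; the first diagonal $\mathbf I$ is $n_u\times n_u$ and the $\mathbf I$ in row 2 is $n_x\times n_x$. For $\mathbf L,L\in\mathbb{R}^{m\times n}$ and symmetric invertible $\mathbf D,D\in\mathbb{R}^{m\times m}$, $\mathcal{L}^{L,D}_{\mathbf L,\mathbf D}:=\mathbf L^\top D^{-1}L+L^\top D^{-1}\mathbf L-L^\top D^{-1}\mathbf DD^{-1}L$. *)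

theory Defs
  imports "HOL-Analysis.Analysis"
begin

definition pos_def :: "real^'n^'n \<Rightarrow> bool" where
  "pos_def M \<longleftrightarrow> transpose M = M \<and> (\<forall>x. x \<noteq> 0 \<longrightarrow> x \<bullet> (M *v x) > 0)"

definition neg_def :: "real^'n^'n \<Rightarrow> bool" where
  "neg_def M \<longleftrightarrow> transpose M = M \<and> (\<forall>x. x \<noteq> 0 \<longrightarrow> x \<bullet> (M *v x) < 0)"

text \<open>The operator L^{L,D}_{Lb,Db} = Lb^T D^-1 L + L^T D^-1 Lb - L^T D^-1 Db D^-1 L.\<close>
definition Lop :: "real^'n^'m \<Rightarrow> real^'m^'m \<Rightarrow> real^'n^'m \<Rightarrow> real^'m^'m \<Rightarrow> real^'n^'n" where
  "Lop Lb Db L D = transpose Lb ** matrix_inv D ** L + transpose L ** matrix_inv D ** Lb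
                   - transpose L ** matrix_inv D ** Db ** matrix_inv D ** L"

definition hcat :: "real^'b^'a \<Rightarrow> real^'c^'a \<Rightarrow> real^('b+'c)^'a" where
  "hcat P Q = (\<chi> i j. case j of Inl b \<Rightarrow> P$i$b | Inr c \<Rightarrow> Q$i$c)"

definition blk2 :: "real^'b^'a \<Rightarrow> real^'d^'a \<Rightarrow> real^'b^'c \<Rightarrow> real^'d^'c \<Rightarrow> real^('b+'d)^('a+'c)" where
  "blk2 P Q R S = (\<chi> i j. case i of
      Inl a \<Rightarrow> (case j of Inl b \<Rightarrow> P$a$b | Inr d \<Rightarrow> Q$a$d)
    | Inr c \<Rightarrow> (case j of Inl b \<Rightarrow> R$c$b | Inr d \<Rightarrow> S$c$d))"

definition sblk2 :: "real^'a^'a \<Rightarrow> real^'c^'a \<Rightarrow> real^'c^'c \<Rightarrow> real^('a+'c)^('a+'c)" where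
  "sblk2 P Q S = blk2 P Q (transpose Q) S"

definition sblk5 ::
  "real^'a^'a \<Rightarrow> real^'b^'a \<Rightarrow> real^'c^'a \<Rightarrow> real^'d^'a \<Rightarrow> real^'e^'a \<Rightarrow>
   real^'b^'b \<Rightarrow> real^'c^'b \<Rightarrow> real^'d^'b \<Rightarrow> real^'e^'b \<Rightarrow>
   real^'c^'c \<Rightarrow> real^'d^'c \<Rightarrow> real^'e^'c \<Rightarrow>
   real^'d^'d \<Rightarrow> real^'e^'d \<Rightarrow> real^'e^'e \<Rightarrow>
   real^('a+('b+('c+('d+'e))))^('a+('b+('c+('d+'e))))" where
  "sblk5 M11 M12 M13 M14 M15 M22 M23 M24 M25 M33 M34 M35 M44 M45 M55 =
     sblk2 M11 (hcat M12 (hcat M13 (hcat M14 M15)))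
      (sblk2 M22 (hcat M23 (hcat M24 M25))
        (sblk2 M33 (hcat M34 M35)
          (sblk2 M44 M45 M55)))"

text \<open>The LMI matrix in the variables (Ab,Bb,Kb,Thb); nominal (B,K,Th), fixed weights Qt, Rt.\<close>
definition lmi :: "real^'n^'n \<Rightarrow> real^'u^'u \<Rightarrow> real^'u^'n \<Rightarrow> real^'n^'u \<Rightarrow> real^'n^'n \<Rightarrow>
    real^'n^'n \<Rightarrow> real^'u^'n \<Rightarrow> real^'n^'u \<Rightarrow> real^'n^'n \<Rightarrow>
    real^('u+('n+('u+('n+'n))))^('u+('n+('u+('n+'n))))" where
  "lmi Qt Rt B K Th Ab Bb Kb Thb =
     sblk5 (mat 1 :: real^'u^'u) (0 :: real^'n^'u) (0 :: real^'u^'u) (- transpose Bb) Kb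
           (matrix_inv Qt) (0 :: real^'u^'n) (0 :: real^'n^'n) (mat 1 :: real^'n^'n)
           (matrix_inv Rt) (0 :: real^'n^'u) Kb
           (Lop (mat 1 :: real^'n^'n) Thb (mat 1) Th + Lop (transpose Bb) (mat 1 :: real^'u^'u) (transpose B) (mat 1))
           Ab
           (Thb + Lop Kb (mat 1 :: real^'u^'u) K (mat 1))"

end

theory Submission
  imports Defs
begin

(* For positive definite Db, the operator Lop is a tangent lower bound of Lb^T Db^-1 Lb:
     x^T (Lop Lb Db L D) x = |Lb x|^2_{Db^-1} - |Db D^-1 L x - Lb x|^2_{Db^-1},
   with zero gap at (Lb, Db) = (L, D).  Completing squares, the quadratic form of the LMI matrix
   at (a, b, c, d, e) is a sum of four weighted squares, minus these gaps, minus e^T X e, where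
   X is the matrix of (D) at the bold variables.  At the nominal point the gaps vanish, so (D)
   makes the form positive; conversely, choosing a, b, c, d that annihilate the four squares
   gives 0 < -e^T X e for every e \<noteq> 0. *)

definition vec_join :: "real^'a \<Rightarrow> real^'b \<Rightarrow> real^('a+'b)" where
  "vec_join x y = (\<chi> i. case i of Inl a \<Rightarrow> x$a | Inr b \<Rightarrow> y$b)"

abbreviation vec_join5 where
  "vec_join5 a b c d e \<equiv> vec_join a (vec_join b (vec_join c (vec_join d e)))"

lemma sum_UNIV_sum:
  fixes f :: "'a::finite + 'b::finite \<Rightarrow> real"
  shows "(\<Sum>i\<in>UNIV. f i) = (\<Sum>a\<in>UNIV. f (Inl a)) + (\<Sum>b\<in>UNIV. f (Inr b))"
  using sum.Plus[of "UNIV :: 'a set" "UNIV :: 'b set" f] by (simp add: comp_def)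

lemma inner_vec_join: "vec_join x y \<bullet> vec_join x' y' = x \<bullet> x' + y \<bullet> y'"
  unfolding inner_vec_def vec_join_def by (simp add: sum_UNIV_sum)

lemma vec_join_eq_0_iff: "vec_join x y = 0 \<longleftrightarrow> x = 0 \<and> y = 0"
  unfolding vec_join_def by (auto simp: vec_eq_iff split: sum.split)

lemma vec_join_cases: obtains x y where "z = vec_join x y"
proof
  show "z = vec_join (\<chi> a. z$Inl a) (\<chi> b. z$Inr b)"
    unfolding vec_join_def by (simp add: vec_eq_iff split: sum.split)
qed

lemma hcat_mult_vec_join: "hcat P Q *v vec_join x y = P *v x + Q *v y"
  unfolding hcat_def vec_join_def matrix_vector_mult_def by (simp add: vec_eq_iff sum_UNIV_sum)

lemma sblk2_mult_vec_join:
  "sblk2 P Q S *v vec_join x y = vec_join (P *v x + Q *v y) (transpose Q *v x + S *v y)"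
  unfolding sblk2_def blk2_def vec_join_def matrix_vector_mult_def
  by (simp add: vec_eq_iff sum_UNIV_sum split: sum.split)

lemma inner_transpose_mult: "(transpose M *v x) \<bullet> y = x \<bullet> (M *v y)" for M :: "real^'n^'m"
  by (simp add: dot_lmul_matrix)

lemma matrix_vector_mult_uminus: "M *v (- x) = - (M *v x)" for M :: "real^'n^'m"
  by (simp add: matrix_vector_mult_def vec_eq_iff sum_negf)

lemma uminus_matrix_vector_mult: "(- M) *v x = - (M *v x)" for M :: "real^'n^'m"
  by (simp add: matrix_vector_mult_def vec_eq_iff sum_negf)

lemma inner_mult_transpose: "x \<bullet> (transpose M *v y) = (M *v x) \<bullet> y" for M :: "real^'n^'m"
  using inner_transpose_mult[of "transpose M" x y] by (simp del: transpose_matrix_vector)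

lemma inner_sblk2:
  "vec_join x y \<bullet> (sblk2 P Q S *v vec_join x y) = x \<bullet> (P *v x) + 2 * (x \<bullet> (Q *v y)) + y \<bullet> (S *v y)"
  using inner_transpose_mult[of Q x y]
  by (simp add: sblk2_mult_vec_join inner_vec_join inner_add_right inner_commute[of y]
      del: transpose_matrix_vector)

lemma transpose_sblk2:
  "transpose P = P \<Longrightarrow> transpose S = S \<Longrightarrow> transpose (sblk2 P Q S) = sblk2 P Q S"
  unfolding sblk2_def blk2_def transpose_def by (auto simp: vec_eq_iff split: sum.split)

lemma transpose_add: "transpose (M + N) = transpose M + transpose N" for M N :: "real^'n^'m"
  by (simp add: transpose_def vec_eq_iff)

lemma transpose_diff: "transpose (M - N) = transpose M - transpose N" for M N :: "real^'n^'m"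
  by (simp add: transpose_def vec_eq_iff)

lemma pos_def_symmetric: "pos_def M \<Longrightarrow> transpose M = M"
  unfolding pos_def_def by blast

lemma pos_def_nonneg: "pos_def M \<Longrightarrow> 0 \<le> x \<bullet> (M *v x)"
  unfolding pos_def_def by (cases "x = 0") (auto intro: less_imp_le)

lemma pos_def_pos: "pos_def M \<Longrightarrow> x \<noteq> 0 \<Longrightarrow> 0 < x \<bullet> (M *v x)"
  unfolding pos_def_def by blast

lemma pos_def_mat_1: "pos_def (mat 1 :: real^'n^'n)"
  unfolding pos_def_def by simp

lemma pos_def_matrix_inv_mult:
  assumes "pos_def (M :: real^'n^'n)"
  shows "matrix_inv M ** M = mat 1" "M ** matrix_inv M = mat 1"
proof -
  have "x = 0" if "M *v x = 0" for x
    using assms that unfolding pos_def_def by (metis inner_zero_right less_irrefl)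
  then have "invertible M"
    using invertible_left_inverse matrix_left_invertible_ker by blast
  then have "M ** matrix_inv M = mat 1 \<and> matrix_inv M ** M = mat 1"
    unfolding invertible_def matrix_inv_def by (rule someI_ex)
  then show "matrix_inv M ** M = mat 1" "M ** matrix_inv M = mat 1" by blast+
qed

lemma pos_def_matrix_inv_mult_vec:
  assumes "pos_def (M :: real^'n^'n)"
  shows "matrix_inv M *v (M *v x) = x" "M *v (matrix_inv M *v x) = x"
  using pos_def_matrix_inv_mult[OF assms] by (simp_all add: matrix_vector_mul_assoc)

lemma matrix_inv_mat_1: "matrix_inv (mat 1 :: real^'n^'n) = mat 1"
  using pos_def_matrix_inv_mult(1)[OF pos_def_mat_1] by simp

lemma pos_def_matrix_inv:
  assumes M: "pos_def (M :: real^'n^'n)"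
  shows "pos_def (matrix_inv M)"
  unfolding pos_def_def
proof (intro conjI allI impI)
  have "M ** transpose (matrix_inv M) = mat 1"
    using pos_def_matrix_inv_mult(1)[OF M] pos_def_symmetric[OF M]
    by (metis matrix_transpose_mul transpose_mat)
  then have "matrix_inv M ** (M ** transpose (matrix_inv M)) = matrix_inv M" by simp
  then show "transpose (matrix_inv M) = matrix_inv M"
    by (simp add: matrix_mul_assoc pos_def_matrix_inv_mult(1)[OF M])
next
  fix x :: "real^'n" assume "x \<noteq> 0"
  define y where "y = matrix_inv M *v x"
  have x: "x = M *v y" unfolding y_def by (simp add: pos_def_matrix_inv_mult_vec[OF M])
  with \<open>x \<noteq> 0\<close> have "y \<noteq> 0" by auto
  then have "0 < y \<bullet> (M *v y)" by (rule pos_def_pos[OF M])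
  then show "0 < x \<bullet> (matrix_inv M *v x)"
    by (simp add: x pos_def_matrix_inv_mult_vec(1)[OF M] inner_commute)
qed

lemma symmetric_inner_mult:
  "transpose M = M \<Longrightarrow> (M *v x) \<bullet> y = x \<bullet> (M *v y)" for M :: "real^'n^'n"
  using inner_transpose_mult[of M x y] by (simp del: transpose_matrix_vector)

lemma inner_pos_def_square:
  assumes M: "pos_def (M :: real^'n^'n)"
  shows "(x + M *v y) \<bullet> (matrix_inv M *v (x + M *v y))
    = x \<bullet> (matrix_inv M *v x) + 2 * (x \<bullet> y) + y \<bullet> (M *v y)"
proof -
  have "(M *v y) \<bullet> (matrix_inv M *v x) = y \<bullet> x"
    using symmetric_inner_mult[OF pos_def_symmetric[OF M], of y "matrix_inv M *v x"]
    by (simp add: pos_def_matrix_inv_mult_vec[OF M])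
  then show ?thesis
    by (simp add: matrix_vector_right_distrib inner_add_left inner_add_right
        pos_def_matrix_inv_mult_vec(1)[OF M] inner_commute[of y x] inner_commute[of "M *v y" y])
qed

lemma inner_Lop:
  fixes Lb L :: "real^'n^'m" and x :: "real^'n"
  assumes D: "pos_def D" and Db: "pos_def Db"
  defines "y \<equiv> matrix_inv D *v (L *v x)"
  shows "x \<bullet> (Lop Lb Db L D *v x)
    = (Lb *v x) \<bullet> (matrix_inv Db *v (Lb *v x))
      - (Db *v y - Lb *v x) \<bullet> (matrix_inv Db *v (Db *v y - Lb *v x))"
proof -
  have symD: "transpose (matrix_inv D) = matrix_inv D"
    using pos_def_symmetric[OF pos_def_matrix_inv[OF D]] .
  have 1: "x \<bullet> ((transpose Lb ** matrix_inv D ** L) *v x) = (Lb *v x) \<bullet> y"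
    by (simp add: y_def inner_mult_transpose matrix_vector_mul_assoc[symmetric] del: transpose_matrix_vector)
  have 2: "x \<bullet> ((transpose L ** matrix_inv D ** Lb) *v x) = (Lb *v x) \<bullet> y"
    using symmetric_inner_mult[OF symD, of "L *v x" "Lb *v x"]
    by (simp add: y_def inner_mult_transpose matrix_vector_mul_assoc[symmetric] inner_commute
        del: transpose_matrix_vector)
  have 3: "x \<bullet> ((transpose L ** matrix_inv D ** Db ** matrix_inv D ** L) *v x) = y \<bullet> (Db *v y)"
    using symmetric_inner_mult[OF symD, of "L *v x" "Db *v y"]
    by (simp add: y_def inner_mult_transpose matrix_vector_mul_assoc[symmetric] del: transpose_matrix_vector)
  have "x \<bullet> (Lop Lb Db L D *v x) = 2 * ((Lb *v x) \<bullet> y) - y \<bullet> (Db *v y)"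
    unfolding Lop_def
    by (simp add: matrix_vector_mult_add_rdistrib matrix_vector_mult_diff_rdistrib inner_add_right
        inner_diff_right 1 2 3 del: transpose_matrix_vector)
  moreover have "(Db *v y - Lb *v x) \<bullet> (matrix_inv Db *v (Db *v y - Lb *v x))
      = (Lb *v x) \<bullet> (matrix_inv Db *v (Lb *v x)) - 2 * ((Lb *v x) \<bullet> y) + y \<bullet> (Db *v y)"
    using inner_pos_def_square[OF Db, of "- (Lb *v x)" y]
    by (simp add: matrix_vector_mult_uminus inner_commute[of y])
  ultimately show ?thesis by linarith
qed

lemma Lop_symmetric:
  assumes "pos_def D" "transpose Db = Db"
  shows "transpose (Lop Lb Db L D) = Lop Lb Db L D"
proof -
  have "transpose (matrix_inv D) = matrix_inv D"
    using pos_def_symmetric[OF pos_def_matrix_inv[OF assms(1)]] .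
  then show ?thesis
    using assms(2) unfolding Lop_def
    by (simp add: transpose_add transpose_diff matrix_transpose_mul matrix_mul_assoc)
qed

definition lyap_decrease ::
  "real^'n^'n \<Rightarrow> real^'u^'u \<Rightarrow> real^'n^'n \<Rightarrow> real^'u^'n \<Rightarrow> real^'n^'u \<Rightarrow> real^'n^'n \<Rightarrow> real^'n^'n" where
  "lyap_decrease Qt Rt A B K Th =
     transpose (A + B ** K) ** Th ** (A + B ** K) - Th + Qt + transpose K ** Rt ** K"

lemma inner_lyap_decrease:
  "e \<bullet> (lyap_decrease Qt Rt A B K Th *v e)
    = ((A + B ** K) *v e) \<bullet> (Th *v ((A + B ** K) *v e)) - e \<bullet> (Th *v e) + e \<bullet> (Qt *v e)
      + (K *v e) \<bullet> (Rt *v (K *v e))"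
  unfolding lyap_decrease_def
  by (simp add: matrix_vector_mult_add_rdistrib matrix_vector_mult_diff_rdistrib inner_add_right
      inner_diff_right inner_mult_transpose matrix_vector_mul_assoc[symmetric] del: transpose_matrix_vector)

lemma lyap_decrease_symmetric:
  assumes "transpose Qt = Qt" "transpose Rt = Rt" "transpose Th = Th"
  shows "transpose (lyap_decrease Qt Rt A B K Th) = lyap_decrease Qt Rt A B K Th"
  using assms unfolding lyap_decrease_def
  by (simp add: transpose_add transpose_diff matrix_transpose_mul matrix_mul_assoc)

lemma inner_lmi:
  "vec_join5 a b c d e \<bullet> (lmi Qt Rt B K Th Ab Bb Kb Thb *v vec_join5 a b c d e)
   = a \<bullet> a - 2 * (a \<bullet> (transpose Bb *v d)) + 2 * (a \<bullet> (Kb *v e))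
     + b \<bullet> (matrix_inv Qt *v b) + 2 * (b \<bullet> e)
     + c \<bullet> (matrix_inv Rt *v c) + 2 * (c \<bullet> (Kb *v e))
     + d \<bullet> (Lop (mat 1) Thb (mat 1) Th *v d) + d \<bullet> (Lop (transpose Bb) (mat 1) (transpose B) (mat 1) *v d)
     + 2 * (d \<bullet> (Ab *v e))
     + e \<bullet> (Thb *v e) + e \<bullet> (Lop Kb (mat 1) K (mat 1) *v e)"
  unfolding lmi_def sblk5_def
  by (simp add: inner_sblk2 hcat_mult_vec_join uminus_matrix_vector_mult inner_add_right inner_diff_right
      matrix_vector_mult_add_rdistrib del: transpose_matrix_vector)

lemma lmi_symmetric:
  assumes "pos_def Qt" "pos_def Rt" "pos_def Th" "transpose Thb = Thb"
  shows "transpose (lmi Qt Rt B K Th Ab Bb Kb Thb) = lmi Qt Rt B K Th Ab Bb Kb Thb"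
  unfolding lmi_def sblk5_def
  by (intro transpose_sblk2)
     (simp_all add: assms pos_def_symmetric pos_def_matrix_inv pos_def_mat_1 transpose_add Lop_symmetric)

lemma inner_lmi_completed_squares:
  fixes Ab :: "real^'n^'n" and Bb :: "real^'u^'n" and Kb :: "real^'n^'u" and e :: "real^'n"
  assumes Qt: "pos_def Qt" and Rt: "pos_def Rt" and Th: "pos_def Th" and Thb: "pos_def Thb"
  defines "g \<equiv> (Ab + Bb ** Kb) *v e"
  shows "vec_join5 a b c d e \<bullet> (lmi Qt Rt B K Th Ab Bb Kb Thb *v vec_join5 a b c d e)
    = (a - transpose Bb *v d + Kb *v e) \<bullet> (a - transpose Bb *v d + Kb *v e)
      + (b + Qt *v e) \<bullet> (matrix_inv Qt *v (b + Qt *v e))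
      + (c + Rt *v (Kb *v e)) \<bullet> (matrix_inv Rt *v (c + Rt *v (Kb *v e)))
      + (d + Thb *v g) \<bullet> (matrix_inv Thb *v (d + Thb *v g))
      - (Thb *v (matrix_inv Th *v d) - d) \<bullet> (matrix_inv Thb *v (Thb *v (matrix_inv Th *v d) - d))
      - (transpose B *v d - transpose Bb *v d) \<bullet> (transpose B *v d - transpose Bb *v d)
      - (K *v e - Kb *v e) \<bullet> (K *v e - Kb *v e)
      - e \<bullet> (lyap_decrease Qt Rt Ab Bb Kb Thb *v e)"
proof -
  let ?u = "transpose Bb *v d" and ?k = "Kb *v e"
  have "d \<bullet> (Lop (mat 1) Thb (mat 1) Th *v d) = d \<bullet> (matrix_inv Thb *v d)
      - (Thb *v (matrix_inv Th *v d) - d) \<bullet> (matrix_inv Thb *v (Thb *v (matrix_inv Th *v d) - d))"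
    using inner_Lop[OF Th Thb, where Lb="mat 1" and L="mat 1" and x=d] by simp
  moreover have "d \<bullet> (Lop (transpose Bb) (mat 1) (transpose B) (mat 1) *v d)
      = ?u \<bullet> ?u - (transpose B *v d - ?u) \<bullet> (transpose B *v d - ?u)"
    using inner_Lop[OF pos_def_mat_1 pos_def_mat_1, where Lb="transpose Bb" and L="transpose B" and x=d]
    by (simp add: matrix_inv_mat_1 del: transpose_matrix_vector)
  moreover have "e \<bullet> (Lop Kb (mat 1) K (mat 1) *v e) = ?k \<bullet> ?k - (K *v e - ?k) \<bullet> (K *v e - ?k)"
    using inner_Lop[OF pos_def_mat_1 pos_def_mat_1, where Lb=Kb and L=K and x=e] by (simp add: matrix_inv_mat_1)
  moreover have "(a - ?u + ?k) \<bullet> (a - ?u + ?k)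
      = a \<bullet> a + ?u \<bullet> ?u + ?k \<bullet> ?k - 2 * (a \<bullet> ?u) + 2 * (a \<bullet> ?k) - 2 * (?u \<bullet> ?k)"
    by (simp add: inner_add_left inner_add_right inner_diff_left inner_diff_right
        inner_commute[of ?u a] inner_commute[of ?k a] inner_commute[of ?k ?u] del: transpose_matrix_vector)
  moreover have "d \<bullet> g = d \<bullet> (Ab *v e) + ?u \<bullet> ?k"
    unfolding g_def
    by (simp add: matrix_vector_mult_add_rdistrib matrix_vector_mul_assoc[symmetric] inner_add_right
        inner_transpose_mult del: transpose_matrix_vector)
  ultimately show ?thesis
    using inner_lmi[of a b c d e Qt Rt B K Th Ab Bb Kb Thb]
      inner_pos_def_square[OF Qt, of b e] inner_pos_def_square[OF Rt, of c ?k]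
      inner_pos_def_square[OF Thb, of d g] inner_lyap_decrease[of e Qt Rt Ab Bb Kb Thb]
    unfolding g_def by (simp add: inner_commute[of e b] del: transpose_matrix_vector)
qed

lemma inner_lmi_le_completed_squares:
  fixes Ab :: "real^'n^'n" and Bb :: "real^'u^'n" and Kb :: "real^'n^'u" and e :: "real^'n"
  assumes Qt: "pos_def Qt" and Rt: "pos_def Rt" and Th: "pos_def Th" and Thb: "pos_def Thb"
  shows "vec_join5 a b c d e \<bullet> (lmi Qt Rt B K Th Ab Bb Kb Thb *v vec_join5 a b c d e)
    \<le> (a - transpose Bb *v d + Kb *v e) \<bullet> (a - transpose Bb *v d + Kb *v e)
      + (b + Qt *v e) \<bullet> (matrix_inv Qt *v (b + Qt *v e))
      + (c + Rt *v (Kb *v e)) \<bullet> (matrix_inv Rt *v (c + Rt *v (Kb *v e)))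
      + (d + Thb *v ((Ab + Bb ** Kb) *v e)) \<bullet> (matrix_inv Thb *v (d + Thb *v ((Ab + Bb ** Kb) *v e)))
      - e \<bullet> (lyap_decrease Qt Rt Ab Bb Kb Thb *v e)"
  using inner_lmi_completed_squares[OF Qt Rt Th Thb, where a=a and b=b and c=c and d=d and e=e
      and B=B and K=K and Ab=Ab and Bb=Bb and Kb=Kb]
    pos_def_nonneg[OF pos_def_matrix_inv[OF Thb], of "Thb *v (matrix_inv Th *v d) - d"]
    inner_ge_zero[of "transpose B *v d - transpose Bb *v d"] inner_ge_zero[of "K *v e - Kb *v e"]
  by linarith

lemma inner_lmi_nominal:
  assumes Qt: "pos_def Qt" and Rt: "pos_def Rt" and Th: "pos_def Th"
  shows "vec_join5 a b c d e \<bullet> (lmi Qt Rt B K Th A B K Th *v vec_join5 a b c d e)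
    = (a - transpose B *v d + K *v e) \<bullet> (a - transpose B *v d + K *v e)
      + (b + Qt *v e) \<bullet> (matrix_inv Qt *v (b + Qt *v e))
      + (c + Rt *v (K *v e)) \<bullet> (matrix_inv Rt *v (c + Rt *v (K *v e)))
      + (d + Th *v ((A + B ** K) *v e)) \<bullet> (matrix_inv Th *v (d + Th *v ((A + B ** K) *v e)))
      - e \<bullet> (lyap_decrease Qt Rt A B K Th *v e)"
  using inner_lmi_completed_squares[OF Qt Rt Th Th, where a=a and b=b and c=c and d=d and e=e
      and B=B and K=K and Ab=A and Bb=B and Kb=K]
  by (simp add: pos_def_matrix_inv_mult_vec(2)[OF Th] del: transpose_matrix_vector)

lemma vec_join5_cases: obtains a b c d e where "z = vec_join5 a b c d e"
  by (metis vec_join_cases)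

lemma lmi_pos_def_nominal:
  fixes A :: "real^'n^'n" and B :: "real^'u^'n" and K :: "real^'n^'u"
  assumes Qt: "pos_def Qt" and Rt: "pos_def Rt" and Th: "pos_def Th"
    and D: "neg_def (lyap_decrease Qt Rt A B K Th)"
  shows "pos_def (lmi Qt Rt B K Th A B K Th)"
  unfolding pos_def_def
proof (intro conjI allI impI)
  show "transpose (lmi Qt Rt B K Th A B K Th) = lmi Qt Rt B K Th A B K Th"
    using lmi_symmetric[OF Qt Rt Th pos_def_symmetric[OF Th]] .
next
  fix z :: "real^('u+('n+('u+('n+'n))))" assume "z \<noteq> 0"
  obtain a b c d e where z: "z = vec_join5 a b c d e" by (rule vec_join5_cases)
  define s1 where "s1 = (a - transpose B *v d + K *v e) \<bullet> (a - transpose B *v d + K *v e)"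
  define s2 where "s2 = (b + Qt *v e) \<bullet> (matrix_inv Qt *v (b + Qt *v e))"
  define s3 where "s3 = (c + Rt *v (K *v e)) \<bullet> (matrix_inv Rt *v (c + Rt *v (K *v e)))"
  define s4 where "s4 = (d + Th *v ((A + B ** K) *v e)) \<bullet> (matrix_inv Th *v (d + Th *v ((A + B ** K) *v e)))"
  have q: "z \<bullet> (lmi Qt Rt B K Th A B K Th *v z) = s1 + s2 + s3 + s4 - e \<bullet> (lyap_decrease Qt Rt A B K Th *v e)"
    unfolding z s1_def s2_def s3_def s4_def by (rule inner_lmi_nominal[OF Qt Rt Th])
  have s_nonneg: "0 \<le> s1" "0 \<le> s2" "0 \<le> s3" "0 \<le> s4"
    unfolding s1_def s2_def s3_def s4_def
    by (simp_all add: pos_def_nonneg pos_def_matrix_inv Qt Rt Th del: transpose_matrix_vector)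
  show "0 < z \<bullet> (lmi Qt Rt B K Th A B K Th *v z)"
  proof (cases "e = 0")
    case False
    then have "e \<bullet> (lyap_decrease Qt Rt A B K Th *v e) < 0"
      using D unfolding neg_def_def by blast
    then show ?thesis using q s_nonneg by linarith
  next
    case True
    have "b \<noteq> 0 \<Longrightarrow> 0 < s2" "c \<noteq> 0 \<Longrightarrow> 0 < s3" "d \<noteq> 0 \<Longrightarrow> 0 < s4" "d = 0 \<Longrightarrow> a \<noteq> 0 \<Longrightarrow> 0 < s1"
      unfolding s1_def s2_def s3_def s4_def using True
      by (simp_all add: pos_def_pos pos_def_matrix_inv Qt Rt Th)
    moreover have "a \<noteq> 0 \<or> b \<noteq> 0 \<or> c \<noteq> 0 \<or> d \<noteq> 0"
      using \<open>z \<noteq> 0\<close> True unfolding z by (auto simp: vec_join_eq_0_iff)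
    ultimately have "0 < s1 + s2 + s3 + s4"
      using s_nonneg by (smt (verit))
    then show ?thesis using q True by simp
  qed
qed

lemma lyap_decrease_neg_def_of_lmi:
  fixes Ab :: "real^'n^'n" and Bb :: "real^'u^'n" and Kb :: "real^'n^'u"
  assumes Qt: "pos_def Qt" and Rt: "pos_def Rt" and Th: "pos_def Th" and Thb: "pos_def Thb"
    and LMI: "pos_def (lmi Qt Rt B K Th Ab Bb Kb Thb)"
  shows "neg_def (lyap_decrease Qt Rt Ab Bb Kb Thb)"
  unfolding neg_def_def
proof (intro conjI allI impI)
  show "transpose (lyap_decrease Qt Rt Ab Bb Kb Thb) = lyap_decrease Qt Rt Ab Bb Kb Thb"
    by (intro lyap_decrease_symmetric pos_def_symmetric Qt Rt Thb)
next
  fix e :: "real^'n" assume "e \<noteq> 0"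
  define d where "d = - (Thb *v ((Ab + Bb ** Kb) *v e))"
  \<comment> \<open>chosen so that the four squares of the completed form vanish\<close>
  define z where "z = vec_join5 (transpose Bb *v d - Kb *v e) (- (Qt *v e)) (- (Rt *v (Kb *v e))) d e"
  have "z \<noteq> 0" using \<open>e \<noteq> 0\<close> unfolding z_def by (simp add: vec_join_eq_0_iff)
  then have "0 < z \<bullet> (lmi Qt Rt B K Th Ab Bb Kb Thb *v z)" by (rule pos_def_pos[OF LMI])
  also have "\<dots> \<le> - (e \<bullet> (lyap_decrease Qt Rt Ab Bb Kb Thb *v e))"
    using inner_lmi_le_completed_squares[OF Qt Rt Th Thb, where a="transpose Bb *v d - Kb *v e"
        and b="- (Qt *v e)" and c="- (Rt *v (Kb *v e))" and d=d and e=e and B=B and K=K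
        and Ab=Ab and Bb=Bb and Kb=Kb]
    unfolding z_def d_def by (simp del: transpose_matrix_vector)
  finally show "e \<bullet> (lyap_decrease Qt Rt Ab Bb Kb Thb *v e) < 0" by simp
qed

theorem theorem3:
  fixes A :: "real^'n^'n" and B :: "real^'u^'n" and K :: "real^'n^'u" and Th :: "real^'n^'n"
    and Qt :: "real^'n^'n" and Rt :: "real^'u^'u"
  assumes Qt: "pos_def Qt" and Rt: "pos_def Rt" and Th: "pos_def Th"
    and D: "neg_def (transpose (A + B ** K) ** Th ** (A + B ** K) - Th + Qt + transpose K ** Rt ** K)"
  shows "pos_def (lmi Qt Rt B K Th A B K Th) \<and>
    (\<forall>(Ab :: real^'n^'n) (Bb :: real^'u^'n) (Kb :: real^'n^'u) (Thb :: real^'n^'n).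
           pos_def Thb \<and> pos_def (lmi Qt Rt B K Th Ab Bb Kb Thb) \<longrightarrow>
           neg_def (transpose (Ab + Bb ** Kb) ** Thb ** (Ab + Bb ** Kb) - Thb + Qt + transpose Kb ** Rt ** Kb))"
  using lmi_pos_def_nominal[OF Qt Rt Th] lyap_decrease_neg_def_of_lmi[OF Qt Rt Th] D
  unfolding lyap_decrease_def by blast

end
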